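(* Let $1\le q<p\le\infty$ with $q<2$, and let $A=(a_{ij})$ be a real $m\times n$ matrix. Then $$\|(A\circ A)^T\colon\ell^m_{q^*/2}\to\ell^n_{p^*/2}\|^{1/2}\ge c(p,q)\max_{j\le n}\sqrt{\ln(j+1)}\,b_j^{\downarrow},$$ where $b_j=\|(a_{ij})_{i\le m}\|_{2q/(2-q)}$ and $c(p,q)>0$ depends only on $p,q$.
   Context: $A\circ A=(a_{ij}^2)$, $p^*$ Hölder conjugate of $p$. $\ell_s^n$ is $\mathbb{R}^n$ with $\|x\|_s=(\sum|x_j|^s)^{1/s}$ ($\max$ for $s=\infty$; quasi-norm for $s<1$), $\|B\colon\ell_s^n\to\ell_t^m\|=\sup_{\|x\|_s\le1}\|Bx\|_t$. $(b_j^{\downarrow})$ is the non-increasing rearrangement of $(|b_j|)$. *)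

theory Defs
  imports "HOL-Analysis.Analysis"
begin

definition hconj :: "ereal \<Rightarrow> ereal" where
  "hconj p = (if p = \<infinity> then 1 else if p = 1 then \<infinity>
              else ereal (real_of_ereal p / (real_of_ereal p - 1)))"

definition lnorm :: "ereal \<Rightarrow> nat set \<Rightarrow> (nat \<Rightarrow> real) \<Rightarrow> real" where
  "lnorm s I x = (if s = \<infinity> then (if I = {} then 0 else Max ((\<lambda>i. \<bar>x i\<bar>) ` I))
                  else (\<Sum>i\<in>I. \<bar>x i\<bar> powr real_of_ereal s) powr (1 / real_of_ereal s))"

definition opnorm :: "ereal \<Rightarrow> ereal \<Rightarrow> nat \<Rightarrow> nat \<Rightarrow> (nat \<Rightarrow> nat \<Rightarrow> real) \<Rightarrow> real" where
  "opnorm s t m n B = Sup {lnorm t {1..n} (\<lambda>j. \<Sum>i\<in>{1..m}. B j i * x i) | x.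
                             lnorm s {1..m} x \<le> 1}"

definition decr_rearr :: "nat \<Rightarrow> (nat \<Rightarrow> real) \<Rightarrow> nat \<Rightarrow> real" where
  "decr_rearr n b j = rev (sort (map (\<lambda>k. \<bar>b k\<bar>) [1..<n+1])) ! (j - 1)"

end

theory Submission
  imports Defs
begin

text \<open>
  Put \<rho> = q/(2 - q) and t = p*/2, so that 2q/(2 - q) = 2\<rho> and q*/2 = \<rho>*. Fix j, let T be
  the j-th largest column norm b_k and S the set of the at least j columns with b_k \<ge> T.
  Testing (A o A)^T on the vector of the unit ball of l_\<rho>* that norms
  \<beta> = (\<Sum>k\<in>S. a_ik^2)_i in l_\<rho>, and comparing the l_1 and l_t norms on S, gives
  ||(A o A)^T|| \<ge> |S|^min(0, 1/t - 1) ||\<beta>||_\<rho>; superadditivity of u^\<rho> gives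
  ||\<beta>||_\<rho> \<ge> |S|^(1/\<rho>) T^2. So the operator norm is at least j^\<delta> T^2 with
  \<delta> = min(0, 1/t - 1) + 1/\<rho>, which is positive since q < p, and
  ln(j + 1) \<le> (1 + 1/\<delta>) j^\<delta> yields the bound with c = (1 + 1/\<delta>)^(-1/2).
\<close>

lemma powr_add_le_add_powr:
  fixes x y s :: real
  assumes "0 \<le> x" "0 \<le> y" "0 < s" "s \<le> 1"
  shows "(x + y) powr s \<le> x powr s + y powr s"
proof -
  have "u * (x + y) powr (s - 1) \<le> u powr s" if "0 \<le> u" "u \<le> x + y" for u
  proof (cases "u = 0")
    case False
    then have "u * (x + y) powr (s - 1) \<le> u * u powr (s - 1)"
      using assms that by (intro mult_left_mono powr_mono2') auto
    then show ?thesis using that powr_mult_base[of u "s - 1"] by simp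
  qed simp
  from this[of x] this[of y]
  have "x * (x + y) powr (s - 1) + y * (x + y) powr (s - 1) \<le> x powr s + y powr s"
    using assms by simp
  moreover have "(x + y) powr s = x * (x + y) powr (s - 1) + y * (x + y) powr (s - 1)"
    using assms powr_mult_base[of "x + y" "s - 1"] by (simp add: algebra_simps)
  ultimately show ?thesis by linarith
qed

lemma add_powr_le_powr_add:
  fixes x y s :: real
  assumes "0 \<le> x" "0 \<le> y" "1 \<le> s"
  shows "x powr s + y powr s \<le> (x + y) powr s"
proof -
  have "u powr s \<le> u * (x + y) powr (s - 1)" if "0 \<le> u" "u \<le> x + y" for u
  proof -
    have "u * u powr (s - 1) \<le> u * (x + y) powr (s - 1)"
      using assms that by (intro mult_left_mono powr_mono2) auto
    then show ?thesis using that powr_mult_base[of u "s - 1"] by simp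
  qed
  from this[of x] this[of y]
  have "x powr s + y powr s \<le> x * (x + y) powr (s - 1) + y * (x + y) powr (s - 1)"
    using assms by simp
  moreover have "(x + y) powr s = x * (x + y) powr (s - 1) + y * (x + y) powr (s - 1)"
    using assms powr_mult_base[of "x + y" "s - 1"] by (simp add: algebra_simps)
  ultimately show ?thesis by linarith
qed

lemma powr_sum_le_sum_powr:
  fixes f :: "'a \<Rightarrow> real"
  assumes "finite S" "\<And>k. k \<in> S \<Longrightarrow> 0 \<le> f k" "0 < s" "s \<le> 1"
  shows "(\<Sum>k\<in>S. f k) powr s \<le> (\<Sum>k\<in>S. f k powr s)"
  using assms
proof (induction S rule: finite_induct)
  case (insert a F)
  then have "(\<Sum>k\<in>insert a F. f k) powr s \<le> f a powr s + (\<Sum>k\<in>F. f k) powr s"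
    by (simp add: powr_add_le_add_powr sum_nonneg)
  with insert show ?case by simp
qed simp

lemma sum_powr_le_powr_sum:
  fixes f :: "'a \<Rightarrow> real"
  assumes "finite S" "\<And>k. k \<in> S \<Longrightarrow> 0 \<le> f k" "1 \<le> s"
  shows "(\<Sum>k\<in>S. f k powr s) \<le> (\<Sum>k\<in>S. f k) powr s"
  using assms
proof (induction S rule: finite_induct)
  case (insert a F)
  then have "f a powr s + (\<Sum>k\<in>F. f k) powr s \<le> (\<Sum>k\<in>insert a F. f k) powr s"
    by (simp add: add_powr_le_powr_add sum_nonneg)
  with insert show ?case by simp
qed simp

lemma powr_sum_le_card_powr_mult_sum_powr:
  fixes y :: "'a \<Rightarrow> real"
  assumes "finite S" "\<And>k. k \<in> S \<Longrightarrow> 0 \<le> y k" "1 \<le> s"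
  shows "(\<Sum>k\<in>S. y k) powr s \<le> real (card S) powr (s - 1) * (\<Sum>k\<in>S. y k powr s)"
proof -
  define P where "P = {k\<in>S. 0 < y k}"
  have P: "finite P" "P \<subseteq> S" using assms(1) by (auto simp: P_def)
  have sum_P: "(\<Sum>k\<in>S. g k) = (\<Sum>k\<in>P. g k)" if "\<And>k. g k = 0 \<longleftrightarrow> y k = 0" for g
    using assms that by (intro sum.mono_neutral_right) (auto simp: P_def less_le)
  show ?thesis
  proof (cases "P = {}")
    case True
    then show ?thesis using sum_P[of y] by (simp add: sum_nonneg)
  next
    case False
    define J where "J = real (card P)"
    have J: "0 < J" "J \<le> real (card S)"
      using False P assms(1) by (auto simp: J_def card_gt_0_iff card_mono)
    \<comment> \<open>Jensen's inequality; powr_convex holds only on the positive reals, hence P\<close>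
    have "(\<Sum>k\<in>P. (1 / J) *\<^sub>R y k) powr s \<le> (\<Sum>k\<in>P. (1 / J) * y k powr s)"
      using J False P assms by (intro convex_on_sum[OF _ _ powr_convex]) (auto simp: J_def P_def)
    then have "((\<Sum>k\<in>P. y k) / J) powr s \<le> (\<Sum>k\<in>P. y k powr s) / J"
      by (simp add: sum_distrib_left[symmetric] sum_divide_distrib[symmetric] divide_inverse_commute)
    then have "(\<Sum>k\<in>P. y k) powr s / J powr s \<le> (\<Sum>k\<in>P. y k powr s) / J"
      using J by (simp add: powr_divide sum_nonneg P_def)
    then have "(\<Sum>k\<in>P. y k) powr s \<le> J powr (s - 1) * (\<Sum>k\<in>P. y k powr s)"
      using J by (simp add: powr_diff field_simps)
    also have "\<dots> \<le> real (card S) powr (s - 1) * (\<Sum>k\<in>P. y k powr s)"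
      using J assms by (intro mult_right_mono powr_mono2 sum_nonneg) auto
    finally show ?thesis using sum_P[of y] sum_P[of "\<lambda>k. y k powr s"] assms by simp
  qed
qed

lemma lnorm_ereal [simp]: "lnorm (ereal r) I x = (\<Sum>i\<in>I. \<bar>x i\<bar> powr r) powr (1 / r)"
  by (simp add: lnorm_def)

lemma card_powr_mult_sum_le_lnorm:
  fixes y :: "nat \<Rightarrow> real"
  assumes S: "finite S" and y: "\<And>k. k \<in> S \<Longrightarrow> 0 \<le> y k" and s: "0 < s"
  shows "real (card S) powr (min 0 (1 / s - 1)) * (\<Sum>k\<in>S. y k) \<le> lnorm (ereal s) S y"
proof -
  have Y: "0 \<le> (\<Sum>k\<in>S. y k)" using y by (simp add: sum_nonneg)
  have abs_y: "(\<Sum>k\<in>S. \<bar>y k\<bar> powr s) = (\<Sum>k\<in>S. y k powr s)" using y by simp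
  show ?thesis
  proof (cases "s \<le> 1")
    case True
    then have "real (card S) powr (min 0 (1 / s - 1)) * (\<Sum>k\<in>S. y k) \<le> (\<Sum>k\<in>S. y k)"
      using s Y by (cases "card S = 0") (auto simp: min_def field_simps)
    also have "\<dots> = ((\<Sum>k\<in>S. y k) powr s) powr (1 / s)"
      using s Y by (simp add: powr_powr)
    also have "\<dots> \<le> lnorm (ereal s) S y"
      using True s S y Y by (simp add: abs_y powr_mono2 powr_sum_le_sum_powr)
    finally show ?thesis .
  next
    case False
    then have "(\<Sum>k\<in>S. y k) powr s \<le> real (card S) powr (s - 1) * (\<Sum>k\<in>S. y k powr s)"
      using S y by (intro powr_sum_le_card_powr_mult_sum_powr) auto
    then have "((\<Sum>k\<in>S. y k) powr s) powr (1 / s)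
        \<le> (real (card S) powr (s - 1) * (\<Sum>k\<in>S. y k powr s)) powr (1 / s)"
      using s by (intro powr_mono2) auto
    then have "(\<Sum>k\<in>S. y k) \<le> real (card S) powr (1 - 1 / s) * lnorm (ereal s) S y"
      using s Y by (simp add: abs_y powr_powr powr_mult sum_nonneg diff_divide_distrib)
    then have "real (card S) powr (1 / s - 1) * (\<Sum>k\<in>S. y k)
        \<le> real (card S) powr (1 / s - 1) * real (card S) powr (1 - 1 / s) * lnorm (ereal s) S y"
      by (simp add: mult_left_mono mult.assoc)
    also have "\<dots> \<le> lnorm (ereal s) S y"
      by (cases "card S = 0") (simp_all add: powr_add[symmetric])
    finally show ?thesis using False by (simp add: min_def field_simps)
  qed
qed

lemma lnorm_mono:
  assumes "0 < t" "\<And>i. i \<in> I \<Longrightarrow> \<bar>x i\<bar> \<le> \<bar>y i\<bar>"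
  shows "lnorm (ereal t) I x \<le> lnorm (ereal t) I y"
  using assms by (simp add: powr_mono2 sum_mono sum_nonneg)

lemma lnorm_mono_set:
  assumes "0 < t" "finite I" "J \<subseteq> I"
  shows "lnorm (ereal t) J x \<le> lnorm (ereal t) I x"
  using assms by (simp add: powr_mono2 sum_mono2 sum_nonneg)

lemma abs_le_one_if_lnorm_le_one:
  assumes s: "0 < s" and x: "lnorm s I x \<le> 1" and I: "finite I" "i \<in> I"
  shows "\<bar>x i\<bar> \<le> 1"
proof (cases s)
  case PInf
  then show ?thesis using x I by (auto simp: lnorm_def Max_le_iff split: if_splits)
next
  case (real r)
  then have r: "0 < r" using s by simp
  have "(\<Sum>i\<in>I. \<bar>x i\<bar> powr r) = ((\<Sum>i\<in>I. \<bar>x i\<bar> powr r) powr (1 / r)) powr r"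
    using r by (simp add: powr_powr sum_nonneg)
  also have "\<dots> \<le> 1"
    using x r real by (simp add: powr_le1)
  finally have "\<bar>x i\<bar> powr r \<le> 1"
    using I member_le_sum[of i I "\<lambda>i. \<bar>x i\<bar> powr r"] by simp
  then show ?thesis using r by (metis gr_one_powr not_le)
qed (use s in simp)

lemma lnorm_le_opnorm:
  assumes s: "0 < s" and t: "0 < t" and x: "lnorm s {1..m} x \<le> 1"
  shows "lnorm (ereal t) {1..n} (\<lambda>j. \<Sum>i\<in>{1..m}. B j i * x i) \<le> opnorm s (ereal t) m n B"
  unfolding opnorm_def
proof (rule cSup_upper)
  define M where "M = (\<Sum>j\<in>{1..n}. \<Sum>i\<in>{1..m}. \<bar>B j i\<bar>)"
  have "lnorm (ereal t) {1..n} (\<lambda>j. \<Sum>i\<in>{1..m}. B j i * z i) \<le> lnorm (ereal t) {1..n} (\<lambda>_. M)"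
    if z: "lnorm s {1..m} z \<le> 1" for z
  proof (rule lnorm_mono[OF t])
    fix j assume j: "j \<in> {1..n}"
    have "\<bar>\<Sum>i\<in>{1..m}. B j i * z i\<bar> \<le> (\<Sum>i\<in>{1..m}. \<bar>B j i\<bar>)"
      using abs_le_one_if_lnorm_le_one[OF s z]
      by (intro order_trans[OF sum_abs] sum_mono) (auto simp: abs_mult mult_left_le)
    also have "\<dots> \<le> M"
      using j unfolding M_def by (intro member_le_sum) (auto intro: sum_nonneg)
    finally show "\<bar>\<Sum>i\<in>{1..m}. B j i * z i\<bar> \<le> \<bar>M\<bar>" by simp
  qed
  then show "bdd_above {lnorm (ereal t) {1..n} (\<lambda>j. \<Sum>i\<in>{1..m}. B j i * x i) | x.
      lnorm s {1..m} x \<le> 1}"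
    by (intro bdd_aboveI) blast
qed (use x in blast)

lemma opnorm_nonneg:
  assumes "0 < s" "0 < t"
  shows "0 \<le> opnorm s (ereal t) m n B"
proof -
  have "lnorm s {1..m} (\<lambda>_. 0) \<le> 1"
    using assms by (cases s) (auto simp: lnorm_def image_constant_conv)
  from lnorm_le_opnorm[OF assms this] show ?thesis
    by (rule order_trans[rotated]) simp
qed

lemma norming_dual_vector:
  fixes \<beta> :: "nat \<Rightarrow> real"
  assumes \<rho>: "1 \<le> \<rho>" and \<beta>: "\<And>i. i \<in> I \<Longrightarrow> 0 \<le> \<beta> i"
  obtains x where "lnorm (hconj (ereal \<rho>)) I x \<le> 1" "\<And>i. 0 \<le> x i"
    "lnorm (ereal \<rho>) I \<beta> = (\<Sum>i\<in>I. \<beta> i * x i)"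
proof (cases "\<rho> = 1")
  case True
  have "lnorm (hconj (ereal \<rho>)) I (\<lambda>_. 1) \<le> 1"
    using True by (auto simp: hconj_def lnorm_def image_constant_conv)
  moreover have "lnorm (ereal \<rho>) I \<beta> = (\<Sum>i\<in>I. \<beta> i * 1)"
    using True \<beta> by (simp add: sum_nonneg)
  ultimately show ?thesis using that[of "\<lambda>_. 1"] by simp
next
  case False
  then have \<rho>1: "1 < \<rho>" using \<rho> by simp
  define r where "r = \<rho> / (\<rho> - 1)"
  have hconj_\<rho>: "hconj (ereal \<rho>) = ereal r" using False by (simp add: hconj_def r_def)
  have r: "0 < r" "(\<rho> - 1) * r = \<rho>" using \<rho>1 by (simp_all add: r_def field_simps)
  define N where "N = lnorm (ereal \<rho>) I \<beta>"
  have N_powr: "N powr \<rho> = (\<Sum>i\<in>I. \<beta> i powr \<rho>)"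
    using \<rho>1 \<beta> by (simp add: N_def powr_powr sum_nonneg)
  show ?thesis
  proof (cases "N = 0")
    case True
    have "lnorm (ereal r) I (\<lambda>_. 0) \<le> 1" by simp
    then show ?thesis using that[of "\<lambda>_. 0"] True by (simp add: hconj_\<rho> N_def)
  next
    case False
    then have N: "0 < N" by (simp add: N_def)
    \<comment> \<open>the equality case of Hoelder's inequality\<close>
    define x where "x i = (\<beta> i / N) powr (\<rho> - 1)" for i
    have "(\<Sum>i\<in>I. \<bar>x i\<bar> powr r) = (\<Sum>i\<in>I. \<beta> i powr \<rho>) / N powr \<rho>"
      using \<beta> N by (simp add: x_def powr_powr r powr_divide sum_divide_distrib)
    then have "lnorm (ereal r) I x \<le> 1" using N by (simp add: N_powr)
    moreover have "(\<Sum>i\<in>I. \<beta> i * x i) = (\<Sum>i\<in>I. \<beta> i powr \<rho>) / N powr (\<rho> - 1)"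
      unfolding sum_divide_distrib
    proof (rule sum.cong)
      fix i assume "i \<in> I"
      then have "\<beta> i * \<beta> i powr (\<rho> - 1) = \<beta> i powr \<rho>"
        using \<beta> powr_mult_base[of "\<beta> i" "\<rho> - 1"] by simp
      then show "\<beta> i * x i = \<beta> i powr \<rho> / N powr (\<rho> - 1)"
        using \<beta> N \<open>i \<in> I\<close> by (simp add: x_def powr_divide)
    qed simp
    moreover have "(\<Sum>i\<in>I. \<beta> i powr \<rho>) / N powr (\<rho> - 1) = N"
      using N by (simp add: N_powr[symmetric] powr_diff)
    ultimately show ?thesis using that[of x] by (simp add: hconj_\<rho> x_def N_def)
  qed
qed

lemma decr_rearr_nonneg:
  assumes "j \<in> {1..n}"
  shows "0 \<le> decr_rearr n f j"
proof -
  let ?xs = "map (\<lambda>k. \<bar>f k\<bar>) [1..<n+1]"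
  have "j - 1 < length (rev (sort ?xs))" using assms by auto
  then have "rev (sort ?xs) ! (j - 1) \<in> set ?xs" by (metis nth_mem set_rev set_sort)
  then show ?thesis unfolding decr_rearr_def by auto
qed

lemma le_card_decr_rearr_le_abs:
  assumes j: "j \<in> {1..n}"
  shows "j \<le> card {k\<in>{1..n}. decr_rearr n f j \<le> \<bar>f k\<bar>}"
proof -
  define xs where "xs = map (\<lambda>k. \<bar>f k\<bar>) [1..<n+1]"
  define L where "L = rev (sort xs)"
  define v where "v = decr_rearr n f j"
  have v: "v = L ! (j - 1)" and len_L: "length L = n"
    by (simp_all add: v_def decr_rearr_def L_def xs_def)
  have "v \<le> y" if "y \<in> set (take j L)" for y
  proof -
    obtain i where "i < j" "i < n" "y = L ! i"
      using \<open>y \<in> set (take j L)\<close> len_L by (auto simp: in_set_conv_nth)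
    then show ?thesis
      using sorted_rev_nth_mono[of L i "j - 1"] j len_L by (simp add: v L_def)
  qed
  then have "j = length (filter ((\<le>) v) (take j L))"
    using j len_L by (simp add: min_def)
  also have "\<dots> \<le> length (filter ((\<le>) v) L)"
    by (metis append_take_drop_id filter_append le_add1 length_append)
  also have "\<dots> = length (filter ((\<le>) v) xs)"
    by (metis L_def length_rev mset_filter mset_sort rev_filter size_mset)
  also have "\<dots> = card {k\<in>{1..n}. v \<le> \<bar>f k\<bar>}"
  proof -
    have "{k. v \<le> \<bar>f k\<bar>} \<inter> set [1..<n+1] = {k\<in>{1..n}. v \<le> \<bar>f k\<bar>}" by auto
    then show ?thesis by (simp add: xs_def filter_map o_def distinct_length_filter)
  qed
  finally show ?thesis by (simp only: v_def)
qed

lemma hconj_pos: "1 \<le> p \<Longrightarrow> 0 < hconj p"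
  by (cases p) (auto simp: hconj_def one_ereal_def)

lemma card_powr_mult_lnorm_row_sums_le_opnorm:
  fixes B :: "nat \<Rightarrow> nat \<Rightarrow> real"
  assumes \<rho>: "1 \<le> \<rho>" and t: "0 < t" and S: "S \<subseteq> {1..n}" and B: "\<And>j i. 0 \<le> B j i"
  shows "real (card S) powr (min 0 (1 / t - 1)) * lnorm (ereal \<rho>) {1..m} (\<lambda>i. \<Sum>j\<in>S. B j i)
    \<le> opnorm (hconj (ereal \<rho>)) (ereal t) m n B"
proof -
  define \<beta> where "\<beta> = (\<lambda>i. \<Sum>j\<in>S. B j i)"
  have "\<And>i. i \<in> {1..m} \<Longrightarrow> 0 \<le> \<beta> i" using B by (simp add: \<beta>_def sum_nonneg)
  then obtain x where x: "lnorm (hconj (ereal \<rho>)) {1..m} x \<le> 1" "\<And>i. 0 \<le> x i"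
    and norming: "lnorm (ereal \<rho>) {1..m} \<beta> = (\<Sum>i\<in>{1..m}. \<beta> i * x i)"
    using norming_dual_vector[OF \<rho>] by blast
  define y where "y j = (\<Sum>i\<in>{1..m}. B j i * x i)" for j
  have "lnorm (ereal \<rho>) {1..m} \<beta> = (\<Sum>j\<in>S. y j)"
    unfolding norming unfolding y_def \<beta>_def sum_distrib_right by (rule sum.swap)
  then have "real (card S) powr (min 0 (1 / t - 1)) * lnorm (ereal \<rho>) {1..m} \<beta>
      = real (card S) powr (min 0 (1 / t - 1)) * (\<Sum>j\<in>S. y j)"
    by simp
  also have "\<dots> \<le> lnorm (ereal t) S y"
    using finite_subset[OF S] t B x(2)
    by (intro card_powr_mult_sum_le_lnorm) (auto simp: y_def sum_nonneg)
  also have "\<dots> \<le> lnorm (ereal t) {1..n} y"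
    using S t by (intro lnorm_mono_set) auto
  also have "\<dots> \<le> opnorm (hconj (ereal \<rho>)) (ereal t) m n B"
    unfolding y_def using hconj_pos \<rho> t x(1) by (intro lnorm_le_opnorm) auto
  finally show ?thesis unfolding \<beta>_def .
qed

lemma card_powr_mult_sq_le_lnorm_row_sums_sq:
  fixes A :: "nat \<Rightarrow> nat \<Rightarrow> real"
  assumes \<rho>: "1 \<le> \<rho>" and T: "0 \<le> T" and I: "finite I" and S: "finite S"
    and col: "\<And>k. k \<in> S \<Longrightarrow> T \<le> lnorm (ereal (2 * \<rho>)) I (\<lambda>i. A i k)"
  shows "real (card S) powr (1 / \<rho>) * T\<^sup>2 \<le> lnorm (ereal \<rho>) I (\<lambda>i. \<Sum>k\<in>S. (A i k)\<^sup>2)"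
proof -
  have sq_powr: "((A i k)\<^sup>2) powr \<rho> = \<bar>A i k\<bar> powr (2 * \<rho>)" for i k
  proof -
    have "(A i k)\<^sup>2 = \<bar>A i k\<bar> powr 2" by simp
    then show ?thesis by (simp only: powr_powr)
  qed
  have "real (card S) * T powr (2 * \<rho>) = (\<Sum>k\<in>S. T powr (2 * \<rho>))" by simp
  also have "\<dots> \<le> (\<Sum>k\<in>S. lnorm (ereal (2 * \<rho>)) I (\<lambda>i. A i k) powr (2 * \<rho>))"
    using T \<rho> col by (intro sum_mono powr_mono2) auto
  also have "\<dots> = (\<Sum>k\<in>S. \<Sum>i\<in>I. ((A i k)\<^sup>2) powr \<rho>)"
    using \<rho> by (simp add: sq_powr powr_powr sum_nonneg)
  also have "\<dots> = (\<Sum>i\<in>I. \<Sum>k\<in>S. ((A i k)\<^sup>2) powr \<rho>)" by (rule sum.swap)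
  also have "\<dots> \<le> (\<Sum>i\<in>I. (\<Sum>k\<in>S. (A i k)\<^sup>2) powr \<rho>)"
    using S \<rho> by (intro sum_mono sum_powr_le_powr_sum) auto
  also have "\<dots> = lnorm (ereal \<rho>) I (\<lambda>i. \<Sum>k\<in>S. (A i k)\<^sup>2) powr \<rho>"
    using \<rho> by (simp add: powr_powr sum_nonneg)
  finally have "(real (card S) * T powr (2 * \<rho>)) powr (1 / \<rho>)
      \<le> (lnorm (ereal \<rho>) I (\<lambda>i. \<Sum>k\<in>S. (A i k)\<^sup>2) powr \<rho>) powr (1 / \<rho>)"
    using \<rho> T by (intro powr_mono2) auto
  moreover have "(T powr (2 * \<rho>)) powr (1 / \<rho>) = T\<^sup>2"
    using \<rho> T by (simp add: powr_powr)
  ultimately show ?thesis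
    using \<rho> by (simp add: powr_mult powr_powr sum_nonneg)
qed

lemma powr_mult_decr_rearr_sq_le_opnorm:
  fixes A :: "nat \<Rightarrow> nat \<Rightarrow> real"
  assumes \<rho>: "1 \<le> \<rho>" and t: "0 < t" and \<delta>: "0 \<le> min 0 (1 / t - 1) + 1 / \<rho>"
    and j: "j \<in> {1..n}"
  shows "real j powr (min 0 (1 / t - 1) + 1 / \<rho>)
      * (decr_rearr n (\<lambda>k. lnorm (ereal (2 * \<rho>)) {1..m} (\<lambda>i. A i k)) j)\<^sup>2
    \<le> opnorm (hconj (ereal \<rho>)) (ereal t) m n (\<lambda>k i. (A i k)\<^sup>2)"
proof -
  define b where "b = (\<lambda>k. lnorm (ereal (2 * \<rho>)) {1..m} (\<lambda>i. A i k))"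
  define T where "T = decr_rearr n b j"
  define S where "S = {k\<in>{1..n}. T \<le> \<bar>b k\<bar>}"
  have "j \<le> card S" unfolding S_def T_def by (rule le_card_decr_rearr_le_abs[OF j])
  then have "real j powr (min 0 (1 / t - 1) + 1 / \<rho>) * T\<^sup>2
      \<le> real (card S) powr (min 0 (1 / t - 1) + 1 / \<rho>) * T\<^sup>2"
    using \<delta> by (intro mult_right_mono powr_mono2) auto
  also have "\<dots> = real (card S) powr (min 0 (1 / t - 1)) * (real (card S) powr (1 / \<rho>) * T\<^sup>2)"
    by (simp add: powr_add)
  also have "\<dots> \<le> real (card S) powr (min 0 (1 / t - 1)) * lnorm (ereal \<rho>) {1..m} (\<lambda>i. \<Sum>k\<in>S. (A i k)\<^sup>2)"
    using \<rho> decr_rearr_nonneg[OF j] unfolding S_def T_def b_def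
    by (intro mult_left_mono card_powr_mult_sq_le_lnorm_row_sums_sq) auto
  also have "\<dots> \<le> opnorm (hconj (ereal \<rho>)) (ereal t) m n (\<lambda>k i. (A i k)\<^sup>2)"
    using \<rho> t by (intro card_powr_mult_lnorm_row_sums_le_opnorm) (auto simp: S_def)
  finally show ?thesis unfolding T_def b_def .
qed

lemma ln_add_one_le_powr:
  fixes d x :: real
  assumes d: "0 < d" and x: "1 \<le> x"
  shows "ln (x + 1) \<le> (1 + 1 / d) * x powr d"
proof -
  have "ln (x + 1) \<le> ln (2 * x)"
    using x by simp
  also have "\<dots> = ln 2 + ln x"
    using x by (simp add: ln_mult)
  also have "ln 2 \<le> x powr d"
    using x d ln_2_less_1 ge_one_powr_ge_zero[of x d] by linarith
  also have "ln x \<le> x powr d / d"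
    using ln_le_minus_one[of "x powr d"] x d by (simp add: ln_powr field_simps)
  finally show ?thesis by (simp add: field_simps)
qed

lemma sqrt_ln_mult_decr_rearr_le_opnorm:
  fixes A :: "nat \<Rightarrow> nat \<Rightarrow> real" and \<rho> t :: real
  defines "\<delta> \<equiv> min 0 (1 / t - 1) + 1 / \<rho>"
  assumes \<rho>: "1 \<le> \<rho>" and t: "0 < t" and \<delta>: "0 < \<delta>" and j: "j \<in> {1..n}"
  shows "sqrt (ln (real j + 1)) * decr_rearr n (\<lambda>k. lnorm (ereal (2 * \<rho>)) {1..m} (\<lambda>i. A i k)) j
    \<le> sqrt (1 + 1 / \<delta>) * opnorm (hconj (ereal \<rho>)) (ereal t) m n (\<lambda>k i. (A i k)\<^sup>2) powr (1 / 2)"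
proof -
  define T where "T = decr_rearr n (\<lambda>k. lnorm (ereal (2 * \<rho>)) {1..m} (\<lambda>i. A i k)) j"
  define N where "N = opnorm (hconj (ereal \<rho>)) (ereal t) m n (\<lambda>k i. (A i k)\<^sup>2)"
  have T: "0 \<le> T" unfolding T_def by (rule decr_rearr_nonneg[OF j])
  have N: "0 \<le> N" unfolding N_def using hconj_pos \<rho> t by (intro opnorm_nonneg) auto
  have "ln (real j + 1) * T\<^sup>2 \<le> (1 + 1 / \<delta>) * real j powr \<delta> * T\<^sup>2"
    using ln_add_one_le_powr[OF \<delta>, of "real j"] j by (intro mult_right_mono) auto
  also have "\<dots> \<le> (1 + 1 / \<delta>) * N"
    unfolding mult.assoc N_def T_def \<delta>_def using \<rho> t \<delta> j
    by (intro mult_left_mono powr_mult_decr_rearr_sq_le_opnorm) (auto simp: \<delta>_def)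
  finally have "sqrt (ln (real j + 1) * T\<^sup>2) \<le> sqrt ((1 + 1 / \<delta>) * N)"
    by (rule real_sqrt_le_mono)
  then show ?thesis
    using T N by (simp add: T_def N_def real_sqrt_mult powr_half_sqrt)
qed

lemma hconj_half_eq_hconj:
  fixes q :: real
  assumes "1 \<le> q" "q < 2"
  shows "hconj (ereal q) / 2 = hconj (ereal (q / (2 - q)))"
proof (cases "q = 1")
  case False
  then have "q / (2 - q) - 1 = 2 * (q - 1) / (2 - q)"
    using assms by (simp add: field_simps)
  then have "q / (2 - q) \<noteq> 1" and "q / (q - 1) / 2 = q / (2 - q) / (q / (2 - q) - 1)"
    using assms False by auto
  then show ?thesis using False by (simp add: hconj_def)
qed (simp add: hconj_def)

lemma hconj_half_real:
  fixes q :: real and p :: ereal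
  assumes q: "1 \<le> q" "ereal q < p"
  obtains t where "0 < t" "hconj p / 2 = ereal t" "2 - 2 / q < 1 / t"
proof (cases p)
  case PInf
  then show ?thesis using q that[of "1 / 2"] by (simp add: hconj_def one_ereal_def)
next
  case (real r)
  then have r: "q < r" "1 < r" using q by auto
  then have "2 - 2 / q < 1 / (r / (r - 1) / 2)"
    using q by (simp add: field_simps)
  then show ?thesis using r real that[of "r / (r - 1) / 2"] by (simp add: hconj_def)
qed (use q in simp)

theorem proposition5p4:
  fixes p q :: ereal
  assumes "1 \<le> q" and "q < p" and "q < 2"
  shows "\<exists>c>0. \<forall>(m::nat) (n::nat) (A :: nat \<Rightarrow> nat \<Rightarrow> real). m \<ge> 1 \<longrightarrow> n \<ge> 1 \<longrightarrow>
    opnorm (hconj q / 2) (hconj p / 2) m n (\<lambda>j i. (A i j)\<^sup>2) powr (1/2)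
      \<ge> c * Max ((\<lambda>j. sqrt (ln (real j + 1)) *
               decr_rearr n (\<lambda>j. lnorm (ereal (2 * real_of_ereal q / (2 - real_of_ereal q)))
                                   {1..m} (\<lambda>i. A i j)) j) ` {1..n})"
proof -
  obtain q' where q: "q = ereal q'" and q': "1 \<le> q'" "q' < 2"
    using assms by (cases q) auto
  define \<rho> where "\<rho> = q' / (2 - q')"
  have \<rho>: "1 \<le> \<rho>" using q' by (simp add: \<rho>_def field_simps)
  obtain t where t: "0 < t" "hconj p / 2 = ereal t" "2 - 2 / q' < 1 / t"
    using hconj_half_real[OF q'(1)] assms(2) q by blast
  define \<delta> where "\<delta> = min 0 (1 / t - 1) + 1 / \<rho>"
  have "0 < \<delta>"
    using q' t(3) by (auto simp: \<delta>_def \<rho>_def min_def field_simps)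
  have exponents: "hconj q / 2 = hconj (ereal \<rho>)"
      "2 * real_of_ereal q / (2 - real_of_ereal q) = 2 * \<rho>"
    unfolding q \<rho>_def by (simp_all only: hconj_half_eq_hconj[OF q']) simp
  show ?thesis
    unfolding exponents t(2)
  proof (intro exI[of _ "1 / sqrt (1 + 1 / \<delta>)"] conjI allI impI)
    show "0 < 1 / sqrt (1 + 1 / \<delta>)" using \<open>0 < \<delta>\<close> by (simp add: add_pos_pos)
  next
    fix m n :: nat and A :: "nat \<Rightarrow> nat \<Rightarrow> real"
    assume "1 \<le> n"
    then show "1 / sqrt (1 + 1 / \<delta>) * Max ((\<lambda>j. sqrt (ln (real j + 1)) *
          decr_rearr n (\<lambda>j. lnorm (ereal (2 * \<rho>)) {1..m} (\<lambda>i. A i j)) j) ` {1..n})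
        \<le> opnorm (hconj (ereal \<rho>)) (ereal t) m n (\<lambda>j i. (A i j)\<^sup>2) powr (1 / 2)"
      using sqrt_ln_mult_decr_rearr_le_opnorm[OF \<rho> t(1)] \<open>0 < \<delta>\<close>
      by (simp add: \<delta>_def Max_le_iff divide_le_eq mult.commute add_pos_pos)
  qed
qed

end
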